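(* Fix $N_x,N_s,N_\phi\in\mathbb{N}$ and angles $0\le\phi_0<\dots<\phi_{N_\phi-1}<\pi$, with the discretization described in the context. Let $f_\delta\in U_\delta$. Then for all $\hat q\in\{0,\dots,N_\phi-1\}$ and $\hat p\in\{0,\dots,N_s-1\}$, $$[\mathcal{R} f_\delta](\phi_{\hat q},s_{\hat p})=[\mathcal{R}_{\omega^{\mathrm{rd}}} f_\delta](\phi_{\hat q},s_{\hat p}).$$ Moreover, for fixed $\hat q$ and fixed $\hat i,\hat j\in\{0,\dots,N_x-1\}$ such that $x_{\hat i\hat j}\cdot\vartheta_{\hat q}\in[s_0,s_{N_s-1}]$, we have $$\sum_{p=0}^{N_s-1}\omega^{\mathrm{pd}}(x_{\hat i\hat j}\cdot\vartheta_{\hat q}-s_p)=\frac{1}{\delta_s},$$ where the sum has exactly two non-zero summands, namely $p=\hat p$ and $p=\hat p+1$, if $x_{\hat i\hat j}\cdot\vartheta_{\hat q}\in\,]s_{\hat p},s_{\hat p+1}[$, and exactly one non-zero summand, $p=\hat p$, if $x_{\hat i\hat j}\cdot\vartheta_{\hat q}=s_{\hat p}$.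
   Context: Let $\Omega=B(0,1)\subset\mathbb{R}^2$ and $\Sigma=[0,\pi[\times\,]-1,1[$. For $\phi\in\mathbb{R}$ write $\vartheta_\phi=(\cos\phi,\sin\phi)$, $\vartheta_\phi^\perp=(-\sin\phi,\cos\phi)$, and $\vartheta_q:=\vartheta_{\phi_q}$. The Radon transform of an (integrable, e.g. piecewise constant) function $f$ on $\Omega$ is $[\mathcal{R}f](\phi,s)=\int_{-\sqrt{1-s^2}}^{\sqrt{1-s^2}} f(s\vartheta_\phi+t\vartheta_\phi^\perp)\,dt$, i.e. the integral of $f$ along the line $L_{\phi,s}=\{s\vartheta_\phi+t\vartheta_\phi^\perp: t\in\mathbb{R}\}$ with respect to one-dimensional Hausdorff measure. Discretization: $\delta_x=2/N_x$, pixel centers $x_{ij}=((i+\tfrac12)\delta_x-1,(j+\tfrac12)\delta_x-1)$ and pixels $X_{ij}=x_{ij}+[-\delta_x/2,\delta_x/2]^2$ for $i,j\in\{0,\dots,N_x-1\}$. $\delta_s=2/N_s$, detector centers $s_p=(p+\tfrac12)\delta_s-1$, detector pixels $S_p=s_p+[-\delta_s/2,\delta_s/2[$, $p\in\{0,\dots,N_s-1\}$. Angular pixels $\Phi_q=[\frac{\phi_{q-1}+\phi_q}{2},\frac{\phi_q+\phi_{q+1}}{2}[$ with $\phi_{-1}:=\phi_{N_\phi-1}-\pi$, $\phi_{N_\phi}:=\phi_0+\pi$ (projected $\pi$-periodically into $[0,\pi[$ if necessary). $U_\delta=\mathrm{span}\{u_{ij}\}$ with $u_{ij}=\chi_{X_{ij}}-\frac12\chi_{\partial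 X_{ij}}$ ($\chi_M$ the indicator of $M$). Ray-driven weight: for $\phi\in[0,\pi[$ let $\overline s(\phi)=\frac{\delta_x}{2}(|\cos\phi|+|\sin\phi|)$, $\underline s(\phi)=\frac{\delta_x}{2}\big||\cos\phi|-|\sin\phi|\big|$, $\kappa(\phi)=\min\{1/|\cos\phi|,1/|\sin\phi|\}$ (with $1/0=\infty$), and for $t\in\mathbb{R}$ $$\omega^{\mathrm{rd}}(\phi,t)=\frac{1}{\delta_x}\begin{cases}\frac{\overline s(\phi)-|t|}{\delta_x|\cos\phi\sin\phi|}& |t|\in[\underline s(\phi),\overline s(\phi)[,\\ \kappa(\phi)& |t|<\underline s(\phi),\\ \frac12 & \phi\in\{0,\pi/2\},\ |t|=\overline s(\phi),\\ 0&\text{else}.\end{cases}$$ Pixel-driven weight: $\omega^{\mathrm{pd}}(t)=\frac{1}{\delta_s^2}\max\{\delta_s-|t|,0\}$ (independent of $\phi$). Convolutional Radon transform for a weight $\omega$: for $f\in L^2(\Omega)$, $$[\mathcal{R}_\omega f](\phi,s)=\sum_{q=0}^{N_\phi-1}\sum_{p=0}^{N_s-1}\chi_{\Phi_q\times S_p}(\phi,s)\sum_{i,j=0}^{N_x-1}\omega(\phi_q,x_{ij}\cdot\vartheta_q-s_p)\int_{X_{ij}}f(x)\,dx,$$ and $\mathcal{R}_{\omega^{\mathrm{rd}}}$ is the ray-driven Radon transform.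
   Formalization: The function $f_\delta \in U_\delta$ also vanishes outside the closed unit disk, so its coefficient on every pixel $X_{ij}$ not contained in that disk is zero. The statement above fails without it. *)

theory Defs
  imports "HOL-Analysis.Analysis"
begin

definition dx :: "nat \<Rightarrow> real" where "dx Nx = 2 / real Nx"

definition xc :: "nat \<Rightarrow> nat \<Rightarrow> nat \<Rightarrow> real \<times> real" where
  "xc Nx i j = ((real i + 1/2) * dx Nx - 1, (real j + 1/2) * dx Nx - 1)"

definition pix :: "nat \<Rightarrow> nat \<Rightarrow> nat \<Rightarrow> (real \<times> real) set" where
  "pix Nx i j = cbox (xc Nx i j - (dx Nx / 2, dx Nx / 2)) (xc Nx i j + (dx Nx / 2, dx Nx / 2))"

definition ds :: "nat \<Rightarrow> real" where "ds Ns = 2 / real Ns"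

definition sc :: "nat \<Rightarrow> nat \<Rightarrow> real" where
  "sc Ns p = (real p + 1/2) * ds Ns - 1"

definition detpix :: "nat \<Rightarrow> nat \<Rightarrow> real set" where
  "detpix Ns p = {sc Ns p - ds Ns / 2 ..< sc Ns p + ds Ns / 2}"

definition theta :: "real \<Rightarrow> real \<times> real" where "theta \<phi> = (cos \<phi>, sin \<phi>)"
definition thetap :: "real \<Rightarrow> real \<times> real" where "thetap \<phi> = (- sin \<phi>, cos \<phi>)"

definition ubasis :: "nat \<Rightarrow> nat \<Rightarrow> nat \<Rightarrow> real \<times> real \<Rightarrow> real" where
  "ubasis Nx i j x = indicator (pix Nx i j) x - 1/2 * indicator (frontier (pix Nx i j)) x"

definition in_U :: "nat \<Rightarrow> (real \<times> real \<Rightarrow> real) \<Rightarrow> bool" where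
  "in_U Nx f \<longleftrightarrow> (\<exists>c :: nat \<Rightarrow> nat \<Rightarrow> real.
      f = (\<lambda>x. \<Sum>i<Nx. \<Sum>j<Nx. c i j * ubasis Nx i j x))"

text \<open>Radon transform (line integral over the chord of the unit disk).\<close>
definition radon :: "(real \<times> real \<Rightarrow> real) \<Rightarrow> real \<Rightarrow> real \<Rightarrow> real" where
  "radon f \<phi> s = integral {- sqrt (1 - s\<^sup>2) .. sqrt (1 - s\<^sup>2)}
      (\<lambda>t. f (s *\<^sub>R theta \<phi> + t *\<^sub>R thetap \<phi>))"

text \<open>kappa(phi) = min(1/|cos|, 1/|sin|) with 1/0 = infinity.\<close>
definition kappa :: "real \<Rightarrow> real" where
  "kappa \<phi> = (if cos \<phi> = 0 then 1 / \<bar>sin \<phi>\<bar>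
              else if sin \<phi> = 0 then 1 / \<bar>cos \<phi>\<bar>
              else min (1 / \<bar>cos \<phi>\<bar>) (1 / \<bar>sin \<phi>\<bar>))"

definition sbar :: "real \<Rightarrow> real \<Rightarrow> real" where
  "sbar d \<phi> = d / 2 * (\<bar>cos \<phi>\<bar> + \<bar>sin \<phi>\<bar>)"

definition sunder :: "real \<Rightarrow> real \<Rightarrow> real" where
  "sunder d \<phi> = d / 2 * \<bar>\<bar>cos \<phi>\<bar> - \<bar>sin \<phi>\<bar>\<bar>"

definition omega_rd :: "real \<Rightarrow> real \<Rightarrow> real \<Rightarrow> real" where
  "omega_rd d \<phi> t = (1 / d) *
     (if sunder d \<phi> \<le> \<bar>t\<bar> \<and> \<bar>t\<bar> < sbar d \<phi> then (sbar d \<phi> - \<bar>t\<bar>) / (d * \<bar>cos \<phi> * sin \<phi>\<bar>)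
      else if \<bar>t\<bar> < sunder d \<phi> then kappa \<phi>
      else if (\<phi> = 0 \<or> \<phi> = pi / 2) \<and> \<bar>t\<bar> = sbar d \<phi> then 1 / 2
      else 0)"

definition omega_pd :: "real \<Rightarrow> real \<Rightarrow> real" where
  "omega_pd d t = max (d - \<bar>t\<bar>) 0 / d\<^sup>2"

definition phiext :: "nat \<Rightarrow> (nat \<Rightarrow> real) \<Rightarrow> int \<Rightarrow> real" where
  "phiext Nphi phi q = (if q = -1 then phi (Nphi - 1) - pi
                        else if q = int Nphi then phi 0 + pi
                        else phi (nat q))"

text \<open>Angular pixel Phi_q, projected pi-periodically into [0,pi[.\<close>
definition angpix :: "nat \<Rightarrow> (nat \<Rightarrow> real) \<Rightarrow> nat \<Rightarrow> real set" where
  "angpix Nphi phi q = {\<psi> \<in> {0..<pi}. \<exists>k::int.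
      (phiext Nphi phi (int q - 1) + phiext Nphi phi (int q)) / 2 \<le> \<psi> + real_of_int k * pi \<and>
      \<psi> + real_of_int k * pi < (phiext Nphi phi (int q) + phiext Nphi phi (int q + 1)) / 2}"

definition conv_radon :: "nat \<Rightarrow> nat \<Rightarrow> nat \<Rightarrow> (nat \<Rightarrow> real) \<Rightarrow> (real \<Rightarrow> real \<Rightarrow> real)
    \<Rightarrow> (real \<times> real \<Rightarrow> real) \<Rightarrow> real \<Rightarrow> real \<Rightarrow> real" where
  "conv_radon Nx Ns Nphi phi \<omega> f \<phi> s =
     (\<Sum>q<Nphi. \<Sum>p<Ns. indicator (angpix Nphi phi q \<times> detpix Ns p) (\<phi>, s) *
        (\<Sum>i<Nx. \<Sum>j<Nx. \<omega> (phi q) (xc Nx i j \<bullet> theta (phi q) - sc Ns p) * integral (pix Nx i j) f))"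

definition ray_radon :: "nat \<Rightarrow> nat \<Rightarrow> nat \<Rightarrow> (nat \<Rightarrow> real)
    \<Rightarrow> (real \<times> real \<Rightarrow> real) \<Rightarrow> real \<Rightarrow> real \<Rightarrow> real" where
  "ray_radon Nx Ns Nphi phi = conv_radon Nx Ns Nphi phi (omega_rd (dx Nx))"

end

theory Submission
  imports Defs
begin

text \<open>Along the line \<open>L(\<phi>, s)\<close> the basis function \<open>u\<^sub>i\<^sub>j\<close> is 1 on the open chord through its pixel
  and 1/2 where the line runs along an edge, which only happens for \<open>\<phi> \<in> {0, \<pi>/2}\<close>. Its line
  integral is therefore the length of the intersection of the two parameter intervals on which the
  line stays in the vertical and in the horizontal strip of the pixel; separating axis-parallel from
  oblique directions identifies this length with \<open>\<delta>\<^sub>x\<^sup>2 \<omega>\<^sup>r\<^sup>d(\<phi>, x\<^sub>i\<^sub>j \<bullet> \<theta> - s)\<close>. As the integral of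
  \<open>f\<^sub>\<delta>\<close> over a pixel is \<open>\<delta>\<^sub>x\<^sup>2\<close> times its coefficient and every node \<open>(\<phi>\<^sub>q, s\<^sub>p)\<close> lies in exactly one
  cell \<open>\<Phi>\<^sub>q \<times> S\<^sub>p\<close>, summing over the pixels gives \<open>R f\<^sub>\<delta> = R\<^sub>\<omega> f\<^sub>\<delta>\<close> at the nodes. The statement on
  \<open>\<omega>\<^sup>p\<^sup>d\<close> is the partition of unity of the hat function \<open>max (1 - |z|) 0\<close> on the integer grid, after the
  substitution \<open>z = (x - s\<^sub>0)/\<delta>\<^sub>s - p\<close>.\<close>

section \<open>Line integrals of the pixel basis functions\<close>

definition square_weight :: "real \<Rightarrow> real \<Rightarrow> real \<Rightarrow> real" where
  "square_weight d u v =
     (if \<bar>u\<bar> < d/2 \<and> \<bar>v\<bar> < d/2 then 1 else if \<bar>u\<bar> \<le> d/2 \<and> \<bar>v\<bar> \<le> d/2 then 1/2 else 0)"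

lemma indicator_square_minus_half_frontier:
  fixes x x0 :: "real \<times> real" and d :: real
  defines "S \<equiv> cbox (x0 - (d/2, d/2)) (x0 + (d/2, d/2))"
  shows "indicator S x - 1/2 * indicator (frontier S) x = square_weight d (fst x - fst x0) (snd x - snd x0)"
proof -
  obtain x1 x2 X Y where x: "x = (x1, x2)" and x0: "x0 = (X, Y)" by fastforce
  have "x \<in> S \<longleftrightarrow> \<bar>x1 - X\<bar> \<le> d/2 \<and> \<bar>x2 - Y\<bar> \<le> d/2"
    unfolding S_def x x0 by (auto simp: abs_if)
  moreover have "x \<in> box (x0 - (d/2, d/2)) (x0 + (d/2, d/2)) \<longleftrightarrow> \<bar>x1 - X\<bar> < d/2 \<and> \<bar>x2 - Y\<bar> < d/2"
    unfolding x x0 by (auto simp: mem_box Basis_prod_def abs_if)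
  ultimately show ?thesis
    unfolding S_def frontier_cbox using x x0 by (auto simp: square_weight_def indicator_def)
qed

lemma has_integral_step_off_finite:
  fixes g :: "real \<Rightarrow> real"
  assumes "finite F"
    and "\<And>t. t \<in> {a..b} - F \<Longrightarrow> g t = k * indicator {l..u} t"
    and "k \<noteq> 0 \<Longrightarrow> l \<le> u \<Longrightarrow> {l..u} \<subseteq> {a..b}"
  shows "(g has_integral k * max 0 (u - l)) {a..b}"
proof (cases "k = 0 \<or> u < l")
  case True
  then have "(\<lambda>t. k * indicator {l..u} t) = (\<lambda>t. 0)" "k * max 0 (u - l) = 0"
    by (auto simp: indicator_def)
  then have "((\<lambda>t. k * indicator {l..u} t) has_integral k * max 0 (u - l)) {a..b}"
    by simp
  then show ?thesis
    using assms(2) by (rule has_integral_spike_finite[OF assms(1), rotated]) auto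
next
  case False
  then have lu: "{l..u} \<inter> {a..b} = {l..u}"
    using assms(3) by auto
  have "((\<lambda>t. k) has_integral k * max 0 (u - l)) {l..u}"
    using False has_integral_const_real[of k l u] by (simp add: max_def mult.commute)
  then have "((\<lambda>t. if t \<in> {l..u} then k else 0) has_integral k * max 0 (u - l)) {a..b}"
    unfolding has_integral_restrict_Int lu .
  then show ?thesis
    by (rule has_integral_spike_finite[OF assms(1), rotated]) (use assms(2) in \<open>auto simp: indicator_def\<close>)
qed

lemma interval_inter_length:
  fixes m1 m2 r1 r2 :: real
  assumes "r1 \<ge> 0" "r2 \<ge> 0"
  shows "max 0 (min (m1 + r1) (m2 + r2) - max (m1 - r1) (m2 - r2))
       = max 0 (min (r1 + r2 - \<bar>m1 - m2\<bar>) (2 * min r1 r2))"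
  using assms by (auto simp: max_def min_def abs_if)

lemma square_weight_axis_line_integral:
  assumes "d > 0" and supp: "\<And>t. square_weight d a (t - m) \<noteq> 0 \<Longrightarrow> t \<in> {lo..hi}"
  shows "((\<lambda>t. square_weight d a (t - m)) has_integral
           d * (if \<bar>a\<bar> < d/2 then 1 else if \<bar>a\<bar> = d/2 then 1/2 else 0)) {lo..hi}"
proof -
  define k :: real where "k = (if \<bar>a\<bar> < d/2 then 1 else if \<bar>a\<bar> = d/2 then 1/2 else 0)"
  have "((\<lambda>t. square_weight d a (t - m)) has_integral k * max 0 ((m + d/2) - (m - d/2))) {lo..hi}"
  proof (rule has_integral_step_off_finite[of "{m - d/2, m + d/2}"])
    fix t assume "t \<in> {lo..hi} - {m - d/2, m + d/2}"
    then show "square_weight d a (t - m) = k * indicator {m - d/2..m + d/2} t"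
      by (auto simp: square_weight_def k_def indicator_def abs_if)
  next
    assume "k \<noteq> 0"
    then have "square_weight d a ((m - d/2) - m) \<noteq> 0" "square_weight d a ((m + d/2) - m) \<noteq> 0"
      by (auto simp: square_weight_def k_def split: if_splits)
    then have "m - d/2 \<in> {lo..hi}" "m + d/2 \<in> {lo..hi}"
      using supp by blast+
    then show "{m - d/2..m + d/2} \<subseteq> {lo..hi}"
      by auto
  qed simp
  then show ?thesis
    by (rule has_integral_eq_rhs) (use \<open>d > 0\<close> in \<open>simp add: k_def\<close>)
qed

lemma abs_affine_le_iff:
  fixes a b r t :: real
  assumes "a \<noteq> 0"
  shows "\<bar>b + t * a\<bar> \<le> r \<longleftrightarrow> \<bar>t - (- b / a)\<bar> \<le> r / \<bar>a\<bar>"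
    and "\<bar>b + t * a\<bar> < r \<longleftrightarrow> \<bar>t - (- b / a)\<bar> < r / \<bar>a\<bar>"
proof -
  have "\<bar>b + t * a\<bar> = \<bar>a\<bar> * \<bar>t - (- b / a)\<bar>"
    using assms by (simp add: abs_mult[symmetric] algebra_simps)
  then show "\<bar>b + t * a\<bar> \<le> r \<longleftrightarrow> \<bar>t - (- b / a)\<bar> \<le> r / \<bar>a\<bar>"
    and "\<bar>b + t * a\<bar> < r \<longleftrightarrow> \<bar>t - (- b / a)\<bar> < r / \<bar>a\<bar>"
    using assms by (simp_all add: pos_le_divide_eq pos_less_divide_eq mult.commute)
qed

lemma square_weight_oblique_line_integral:
  assumes "d > 0" "a \<noteq> 0" "c \<noteq> 0"
    and supp: "\<And>t. square_weight d (u + t * a) (v + t * c) \<noteq> 0 \<Longrightarrow> t \<in> {lo..hi}"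
  shows "((\<lambda>t. square_weight d (u + t * a) (v + t * c)) has_integral
           max 0 (min (d/(2 * \<bar>a\<bar>) + d/(2 * \<bar>c\<bar>) - \<bar>u/a - v/c\<bar>) (2 * min (d/(2 * \<bar>a\<bar>)) (d/(2 * \<bar>c\<bar>)))))
           {lo..hi}"
proof -
  define m1 m2 r1 r2 where "m1 = - u/a" and "m2 = - v/c" and "r1 = d/(2 * \<bar>a\<bar>)" and "r2 = d/(2 * \<bar>c\<bar>)"
  have r: "r1 \<ge> 0" "r2 \<ge> 0"
    using assms by (simp_all add: r1_def r2_def)
  have u_le: "\<bar>u + t * a\<bar> \<le> d/2 \<longleftrightarrow> \<bar>t - m1\<bar> \<le> r1" and u_less: "\<bar>u + t * a\<bar> < d/2 \<longleftrightarrow> \<bar>t - m1\<bar> < r1"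
    and v_le: "\<bar>v + t * c\<bar> \<le> d/2 \<longleftrightarrow> \<bar>t - m2\<bar> \<le> r2" and v_less: "\<bar>v + t * c\<bar> < d/2 \<longleftrightarrow> \<bar>t - m2\<bar> < r2" for t
    using abs_affine_le_iff[OF assms(2), of u t "d/2"] abs_affine_le_iff[OF assms(3), of v t "d/2"]
    by (simp_all add: m1_def m2_def r1_def r2_def)
  define l h where "l = max (m1 - r1) (m2 - r2)" and "h = min (m1 + r1) (m2 + r2)"
  have closed: "\<bar>u + t * a\<bar> \<le> d/2 \<and> \<bar>v + t * c\<bar> \<le> d/2 \<longleftrightarrow> t \<in> {l..h}" for t
    unfolding u_le v_le l_def h_def by (auto simp: abs_le_iff)
  have step: "((\<lambda>t. square_weight d (u + t * a) (v + t * c)) has_integral 1 * max 0 (h - l)) {lo..hi}"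
  proof (rule has_integral_step_off_finite[of "{m1 - r1, m1 + r1, m2 - r2, m2 + r2}"])
    fix t assume "t \<in> {lo..hi} - {m1 - r1, m1 + r1, m2 - r2, m2 + r2}"
    then have "\<bar>t - m1\<bar> \<noteq> r1" "\<bar>t - m2\<bar> \<noteq> r2"
      by (auto simp: abs_if)
    then show "square_weight d (u + t * a) (v + t * c) = 1 * indicator {l..h} t"
      using closed[of t] unfolding square_weight_def u_le u_less v_le v_less
      by (auto simp: indicator_def)
  next
    assume "l \<le> h"
    then have "square_weight d (u + l * a) (v + l * c) \<noteq> 0" "square_weight d (u + h * a) (v + h * c) \<noteq> 0"
      using closed[of l] closed[of h] by (auto simp: square_weight_def)
    then show "{l..h} \<subseteq> {lo..hi}"
      using supp by auto
  qed simp
  have "\<bar>m1 - m2\<bar> = \<bar>u/a - v/c\<bar>"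
    by (simp add: m1_def m2_def abs_minus_commute)
  then have "max 0 (h - l) = max 0 (min (r1 + r2 - \<bar>u/a - v/c\<bar>) (2 * min r1 r2))"
    unfolding l_def h_def using interval_inter_length[OF r, of m1 m2] by simp
  with step show ?thesis
    unfolding r1_def r2_def by (simp only: mult_1)
qed

lemma omega_rd_axis:
  assumes "d > 0" "\<phi> = 0 \<or> \<phi> = pi/2"
  shows "d^2 * omega_rd d \<phi> \<tau> = d * (if \<bar>\<tau>\<bar> < d/2 then 1 else if \<bar>\<tau>\<bar> = d/2 then 1/2 else 0)"
proof -
  have "cos \<phi> = 1 \<and> sin \<phi> = 0 \<or> cos \<phi> = 0 \<and> sin \<phi> = 1"
    using assms(2) by (metis cos_zero sin_zero cos_pi_half sin_pi_half)
  then have "sbar d \<phi> = d/2" "sunder d \<phi> = d/2" "kappa \<phi> = 1"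
    by (auto simp: sbar_def sunder_def kappa_def)
  then show ?thesis
    using assms unfolding omega_rd_def by (simp add: power2_eq_square)
qed

lemma trapezoid_eq_max_min:
  fixes P Q T :: real
  assumes "P \<ge> 0" "Q \<ge> 0" "T \<ge> 0"
  shows "(if \<bar>P - Q\<bar>/2 \<le> T \<and> T < (P + Q)/2 then (P + Q)/2 - T else if T < \<bar>P - Q\<bar>/2 then min P Q else 0)
       = max 0 (min ((P + Q)/2 - T) (min P Q))"
  using assms by argo

lemma omega_rd_oblique:
  assumes "d > 0" "sin \<phi> \<noteq> 0" "cos \<phi> \<noteq> 0"
  shows "d^2 * omega_rd d \<phi> \<tau> =
    max 0 (min (d/(2 * \<bar>sin \<phi>\<bar>) + d/(2 * \<bar>cos \<phi>\<bar>) - \<bar>\<tau>\<bar> / \<bar>cos \<phi> * sin \<phi>\<bar>)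
               (2 * min (d/(2 * \<bar>sin \<phi>\<bar>)) (d/(2 * \<bar>cos \<phi>\<bar>))))"
proof -
  define p q where "p = \<bar>cos \<phi>\<bar>" and "q = \<bar>sin \<phi>\<bar>"
  define P Q where "P = d * p" and "Q = d * q"
  have pq: "p > 0" "q > 0"
    using assms by (simp_all add: p_def q_def)
  have axis: "\<phi> \<noteq> 0" "\<phi> \<noteq> pi/2"
    using assms(2,3) by (metis sin_zero, metis cos_pi_half)
  have cs: "\<bar>cos \<phi> * sin \<phi>\<bar> = p * q"
    by (simp add: p_def q_def abs_mult)
  have sb: "sbar d \<phi> = (P + Q)/2" and su: "sunder d \<phi> = \<bar>P - Q\<bar>/2"
    using assms(1)
    by (simp_all add: sbar_def sunder_def p_def q_def P_def Q_def abs_mult distrib_left right_diff_distrib[symmetric])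
  have dkappa: "d * kappa \<phi> = min P Q / (p * q)"
    using assms pq by (auto simp: kappa_def p_def q_def P_def Q_def min_def field_simps)
  have "d * omega_rd d \<phi> \<tau> =
      (if \<bar>P - Q\<bar>/2 \<le> \<bar>\<tau>\<bar> \<and> \<bar>\<tau>\<bar> < (P + Q)/2 then ((P + Q)/2 - \<bar>\<tau>\<bar>) / (d * (p * q))
       else if \<bar>\<tau>\<bar> < \<bar>P - Q\<bar>/2 then kappa \<phi> else 0)"
    using assms(1) axis unfolding omega_rd_def cs sb su by simp
  then have "d^2 * omega_rd d \<phi> \<tau> =
      (if \<bar>P - Q\<bar>/2 \<le> \<bar>\<tau>\<bar> \<and> \<bar>\<tau>\<bar> < (P + Q)/2 then (P + Q)/2 - \<bar>\<tau>\<bar>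
       else if \<bar>\<tau>\<bar> < \<bar>P - Q\<bar>/2 then min P Q else 0) / (p * q)"
    using assms(1) unfolding power2_eq_square mult.assoc by (simp add: dkappa)
  also have "\<dots> = max 0 (min ((P + Q)/2 - \<bar>\<tau>\<bar>) (min P Q)) / (p * q)"
    using assms(1) pq by (subst trapezoid_eq_max_min) (simp_all add: P_def Q_def)
  also have "\<dots> = max 0 (min (d/(2 * q) + d/(2 * p) - \<bar>\<tau>\<bar> / (p * q)) (2 * min (d/(2 * q)) (d/(2 * p))))"
  proof -
    have "d/(2 * q) + d/(2 * p) - \<bar>\<tau>\<bar> / (p * q) = ((P + Q)/2 - \<bar>\<tau>\<bar>) / (p * q)"
      using pq by (simp add: P_def Q_def field_simps)
    moreover have "2 * min (d/(2 * q)) (d/(2 * p)) = min P Q / (p * q)"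
      using assms(1) pq by (auto simp: P_def Q_def min_def field_simps)
    ultimately show ?thesis
      using pq by (simp add: min_divide_distrib_right max_divide_distrib_right)
  qed
  finally show ?thesis
    unfolding cs by (simp only: p_def q_def)
qed

lemma angle_cases:
  assumes "0 \<le> \<phi>" "\<phi> < pi"
  obtains "\<phi> = 0" | "\<phi> = pi/2" | "sin \<phi> \<noteq> 0" "cos \<phi> \<noteq> 0"
proof (cases "\<phi> = 0 \<or> \<phi> = pi/2")
  case False
  then have "sin \<phi> > 0"
    using assms by (auto intro: sin_gt_zero)
  moreover have "cos \<phi> \<noteq> 0"
    using False assms cos_inj_pi[of \<phi> "pi/2"] by auto
  ultimately show ?thesis
    using that by simp
qed blast+

lemma square_weight_line_integral:
  assumes "d > 0" "0 \<le> \<phi>" "\<phi> < pi"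
    and supp: "\<And>t. square_weight d (u - t * sin \<phi>) (v + t * cos \<phi>) \<noteq> 0 \<Longrightarrow> t \<in> {lo..hi}"
  shows "((\<lambda>t. square_weight d (u - t * sin \<phi>) (v + t * cos \<phi>)) has_integral
           d^2 * omega_rd d \<phi> (- (u * cos \<phi> + v * sin \<phi>))) {lo..hi}"
  using assms(2,3)
proof (cases rule: angle_cases)
  case 1
  have f: "(\<lambda>t. square_weight d (u - t * sin \<phi>) (v + t * cos \<phi>)) = (\<lambda>t. square_weight d u (t - (- v)))"
    by (simp add: 1 add.commute)
  have w: "d^2 * omega_rd d \<phi> (- (u * cos \<phi> + v * sin \<phi>))
      = d * (if \<bar>u\<bar> < d/2 then 1 else if \<bar>u\<bar> = d/2 then 1/2 else 0)"
    using omega_rd_axis[OF assms(1), of 0] unfolding 1 by simp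
  have "((\<lambda>t. square_weight d u (t - (- v))) has_integral
          d * (if \<bar>u\<bar> < d/2 then 1 else if \<bar>u\<bar> = d/2 then 1/2 else 0)) {lo..hi}"
    by (rule square_weight_axis_line_integral[OF assms(1)]) (metis supp f)
  then show ?thesis
    unfolding f w .
next
  case 2
  have f: "(\<lambda>t. square_weight d (u - t * sin \<phi>) (v + t * cos \<phi>)) = (\<lambda>t. square_weight d v (t - u))"
    by (auto simp: 2 square_weight_def abs_minus_commute)
  have w: "d^2 * omega_rd d \<phi> (- (u * cos \<phi> + v * sin \<phi>))
      = d * (if \<bar>v\<bar> < d/2 then 1 else if \<bar>v\<bar> = d/2 then 1/2 else 0)"
    using omega_rd_axis[OF assms(1), of "pi/2"] unfolding 2 by simp
  have "((\<lambda>t. square_weight d v (t - u)) has_integral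
          d * (if \<bar>v\<bar> < d/2 then 1 else if \<bar>v\<bar> = d/2 then 1/2 else 0)) {lo..hi}"
    by (rule square_weight_axis_line_integral[OF assms(1)]) (metis supp f)
  then show ?thesis
    unfolding f w .
next
  case 3
  have "((\<lambda>t. square_weight d (u + t * (- sin \<phi>)) (v + t * cos \<phi>)) has_integral
          max 0 (min (d/(2 * \<bar>- sin \<phi>\<bar>) + d/(2 * \<bar>cos \<phi>\<bar>) - \<bar>u / (- sin \<phi>) - v / cos \<phi>\<bar>)
                     (2 * min (d/(2 * \<bar>- sin \<phi>\<bar>)) (d/(2 * \<bar>cos \<phi>\<bar>))))) {lo..hi}"
    using 3 supp by (intro square_weight_oblique_line_integral[OF assms(1)]) auto
  moreover have "u / (- sin \<phi>) - v / cos \<phi> = - (u * cos \<phi> + v * sin \<phi>) / (cos \<phi> * sin \<phi>)"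
    using 3 by (simp add: field_simps)
  ultimately show ?thesis
    unfolding omega_rd_oblique[OF assms(1) 3] by (simp add: abs_divide)
qed

lemma line_point: "s *\<^sub>R theta \<phi> + t *\<^sub>R thetap \<phi> = (s * cos \<phi> - t * sin \<phi>, s * sin \<phi> + t * cos \<phi>)"
  by (simp add: theta_def thetap_def)

lemma norm_line_point: "norm (s *\<^sub>R theta \<phi> + t *\<^sub>R thetap \<phi>) = sqrt (s^2 + t^2)"
proof -
  have "(s * cos \<phi> - t * sin \<phi>)^2 + (s * sin \<phi> + t * cos \<phi>)^2 = (s^2 + t^2) * ((sin \<phi>)^2 + (cos \<phi>)^2)"
    by algebra
  then show ?thesis
    by (simp add: line_point norm_Pair)
qed

lemma radon_eq_line_integral:
  assumes supp: "\<And>x. x \<notin> cball 0 1 \<Longrightarrow> f x = 0" and "R \<ge> 1"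
    and int: "((\<lambda>t. f (s *\<^sub>R theta \<phi> + t *\<^sub>R thetap \<phi>)) has_integral I) {-R..R}"
  shows "radon f \<phi> s = I"
proof -
  define r where "r = sqrt (1 - s^2)"
  have "r \<le> 1"
    by (simp add: r_def)
  then have chord: "{-r..r} \<inter> {-R..R} = {-r..r}"
    using \<open>R \<ge> 1\<close> by auto
  have vanish: "f (s *\<^sub>R theta \<phi> + t *\<^sub>R thetap \<phi>) = 0" if "t \<notin> {-r..r}" for t
  proof -
    have "1 - s^2 < t^2"
      using that real_sqrt_less_iff[of "1 - s^2" "t^2"] by (auto simp: r_def)
    then have "1 < sqrt (s^2 + t^2)"
      by simp
    then show ?thesis
      using supp by (simp add: norm_line_point)
  qed
  have "((\<lambda>t. if t \<in> {-r..r} then f (s *\<^sub>R theta \<phi> + t *\<^sub>R thetap \<phi>) else 0) has_integral I) {-R..R}"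
    using int by (rule has_integral_eq[rotated]) (use vanish in auto)
  then have "((\<lambda>t. f (s *\<^sub>R theta \<phi> + t *\<^sub>R thetap \<phi>)) has_integral I) {-r..r}"
    unfolding has_integral_restrict_Int chord .
  then show ?thesis
    unfolding radon_def r_def[symmetric] by (rule integral_unique)
qed

lemma dx_pos: "Nx > 0 \<Longrightarrow> dx Nx > 0"
  by (simp add: dx_def)

lemma pix_eq_cbox:
  "pix Nx i j = cbox (real i * dx Nx - 1, real j * dx Nx - 1) ((real i + 1) * dx Nx - 1, (real j + 1) * dx Nx - 1)"
  by (simp add: pix_def xc_def algebra_simps)

lemma pix_subset_unit_square:
  assumes "i < Nx" "j < Nx"
  shows "pix Nx i j \<subseteq> cbox (-1, -1) (1, 1)"
proof -
  have "cbox (real k * dx Nx - 1) ((real k + 1) * dx Nx - 1) \<subseteq> cbox (-1) 1" if "k < Nx" for k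
    using that by (simp add: cbox_interval dx_def field_simps)
  then show ?thesis
    unfolding pix_eq_cbox cbox_Pair_eq using assms by (intro Sigma_mono) blast+
qed

lemma ubasis_eq_0_outside_pix: "x \<notin> pix Nx i j \<Longrightarrow> ubasis Nx i j x = 0"
  by (simp add: ubasis_def pix_def frontier_cbox)

lemma ubasis_eq_1_interior_pix: "x \<in> interior (pix Nx i j) \<Longrightarrow> ubasis Nx i j x = 1"
  using box_subset_cbox by (auto simp: ubasis_def pix_def frontier_cbox indicator_def)

lemma line_param_le_2_in_pix:
  assumes "i < Nx" "j < Nx" "s *\<^sub>R theta \<phi> + t *\<^sub>R thetap \<phi> \<in> pix Nx i j"
  shows "\<bar>t\<bar> \<le> 2"
proof -
  obtain x1 x2 where x: "s *\<^sub>R theta \<phi> + t *\<^sub>R thetap \<phi> = (x1, x2)"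
    by fastforce
  have "(x1, x2) \<in> cbox (-1, -1) (1, 1)"
    using assms(3) pix_subset_unit_square[OF assms(1,2)] x by auto
  then have "\<bar>x1\<bar> \<le> 1" "\<bar>x2\<bar> \<le> 1"
    by (simp_all add: cbox_interval abs_le_iff)
  moreover have "\<bar>t\<bar> \<le> norm (x1, x2)"
    unfolding x[symmetric] norm_line_point using real_sqrt_sum_squares_ge2[of s "\<bar>t\<bar>"] by simp
  moreover have "norm (x1, x2) \<le> \<bar>x1\<bar> + \<bar>x2\<bar>"
    using norm_Pair_le[of x1 x2] by simp
  ultimately show ?thesis
    by linarith
qed

lemma ubasis_line_integral:
  assumes "i < Nx" "j < Nx" "0 \<le> \<phi>" "\<phi> < pi"
  shows "((\<lambda>t. ubasis Nx i j (s *\<^sub>R theta \<phi> + t *\<^sub>R thetap \<phi>)) has_integral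
           dx Nx^2 * omega_rd (dx Nx) \<phi> (xc Nx i j \<bullet> theta \<phi> - s)) {-2..2}"
proof -
  define d where "d = dx Nx"
  obtain X Y where xc: "xc Nx i j = (X, Y)" by fastforce
  define u v where "u = s * cos \<phi> - X" and "v = s * sin \<phi> - Y"
  have d: "d > 0"
    using assms(1) dx_pos by (simp add: d_def)
  have ub: "ubasis Nx i j (s *\<^sub>R theta \<phi> + t *\<^sub>R thetap \<phi>) = square_weight d (u - t * sin \<phi>) (v + t * cos \<phi>)" for t
    using indicator_square_minus_half_frontier[of "xc Nx i j" d]
    unfolding ubasis_def pix_def d_def[symmetric] by (simp add: line_point xc u_def v_def algebra_simps)
  have supp: "t \<in> {-2..2}" if "square_weight d (u - t * sin \<phi>) (v + t * cos \<phi>) \<noteq> 0" for t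
  proof -
    have "s *\<^sub>R theta \<phi> + t *\<^sub>R thetap \<phi> \<in> pix Nx i j"
      using that ub[of t] ubasis_eq_0_outside_pix by metis
    then have "\<bar>t\<bar> \<le> 2"
      by (rule line_param_le_2_in_pix[OF assms(1,2)])
    then show ?thesis
      by auto
  qed
  have "- (u * cos \<phi> + v * sin \<phi>) = X * cos \<phi> + Y * sin \<phi> - s * ((sin \<phi>)^2 + (cos \<phi>)^2)"
    unfolding u_def v_def by algebra
  also have "\<dots> = xc Nx i j \<bullet> theta \<phi> - s"
    by (simp add: xc theta_def)
  finally have tau: "- (u * cos \<phi> + v * sin \<phi>) = xc Nx i j \<bullet> theta \<phi> - s" .
  have "((\<lambda>t. square_weight d (u - t * sin \<phi>) (v + t * cos \<phi>)) has_integral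
          d^2 * omega_rd d \<phi> (- (u * cos \<phi> + v * sin \<phi>))) {-2..2}"
    by (rule square_weight_line_integral[OF d assms(3,4)]) (rule supp)
  then show ?thesis
    unfolding ub tau d_def .
qed

lemma grid_index_unique:
  fixes d x :: real
  assumes "d > 0" "real i * d < x" "x < (real i + 1) * d" "real k * d \<le> x" "x \<le> (real k + 1) * d"
  shows "k = i"
proof -
  have "real k * d < (real i + 1) * d" "real i * d < (real k + 1) * d"
    using assms by linarith+
  then have "real k < real i + 1" "real i < real k + 1"
    using \<open>d > 0\<close> by (simp_all add: mult_less_cancel_right_pos)
  then show ?thesis
    by linarith
qed

lemma pix_index_unique:
  assumes "x \<in> interior (pix Nx i j)" "x \<in> pix Nx k l"
  shows "k = i \<and> l = j"
proof -
  obtain x1 x2 where x: "x = (x1, x2)"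
    by fastforce
  have box: "real i * dx Nx < x1 + 1" "x1 + 1 < (real i + 1) * dx Nx"
            "real j * dx Nx < x2 + 1" "x2 + 1 < (real j + 1) * dx Nx"
    using assms(1) unfolding pix_eq_cbox interior_cbox x by (auto simp: mem_box Basis_prod_def)
  have cbox: "real k * dx Nx \<le> x1 + 1" "x1 + 1 \<le> (real k + 1) * dx Nx"
             "real l * dx Nx \<le> x2 + 1" "x2 + 1 \<le> (real l + 1) * dx Nx"
    using assms(2) unfolding pix_eq_cbox x by auto
  have d: "dx Nx > 0"
    using box(1,2) by (simp add: distrib_right)
  show ?thesis
    using grid_index_unique[OF d box(1,2) cbox(1,2)] grid_index_unique[OF d box(3,4) cbox(3,4)] by blast
qed

lemma integral_pix_in_U:
  assumes "i < Nx" "j < Nx"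
  shows "integral (pix Nx i j) (\<lambda>x. \<Sum>k<Nx. \<Sum>l<Nx. c k l * ubasis Nx k l x) = c i j * dx Nx^2"
proof -
  have const: "(\<Sum>k<Nx. \<Sum>l<Nx. c k l * ubasis Nx k l x) = c i j" if x: "x \<in> interior (pix Nx i j)" for x
  proof -
    have ub: "c k l * ubasis Nx k l x = (if k = i \<and> l = j then c i j else 0)" for k l
    proof (cases "k = i \<and> l = j")
      case True
      then show ?thesis
        using ubasis_eq_1_interior_pix[OF x] by simp
    next
      case False
      then have "x \<notin> pix Nx k l"
        using pix_index_unique[OF x] by blast
      then show ?thesis
        using False by (auto simp: ubasis_eq_0_outside_pix)
    qed
    have "(\<Sum>l<Nx. c k l * ubasis Nx k l x) = (if k = i then c i j else 0)" for k
      using assms(2) by (cases "k = i") (simp_all add: ub)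
    then show ?thesis
      using assms(1) by simp
  qed
  obtain a b where pix: "pix Nx i j = cbox a b"
    by (simp add: pix_def)
  have "measure lborel (pix Nx i j) = dx Nx^2"
    unfolding pix_eq_cbox content_Pair using dx_pos[of Nx] assms
    by (simp add: cbox_interval algebra_simps power2_eq_square)
  then have "((\<lambda>x. c i j) has_integral c i j * dx Nx^2) (cbox a b)"
    using has_integral_const[of "c i j" a b] by (simp add: pix mult.commute)
  then have "((\<lambda>x. \<Sum>k<Nx. \<Sum>l<Nx. c k l * ubasis Nx k l x) has_integral c i j * dx Nx^2) (cbox a b)"
    by (rule has_integral_spike_interior) (use const pix in simp)
  then show ?thesis
    unfolding pix by (rule integral_unique)
qed

section \<open>Detector pixels and the pixel-driven weight\<close>

lemma ds_pos: "Ns > 0 \<Longrightarrow> ds Ns > 0"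
  by (simp add: ds_def)

lemma sc_eq: "sc Ns p = sc Ns 0 + real p * ds Ns"
  by (simp add: sc_def algebra_simps)

lemma sc_mem_detpix_iff:
  assumes "Ns > 0"
  shows "sc Ns p' \<in> detpix Ns p \<longleftrightarrow> p = p'"
proof -
  have "sc Ns p' - sc Ns p = (real p' - real p) * ds Ns"
    by (simp add: sc_def algebra_simps)
  then have "sc Ns p' \<in> detpix Ns p \<longleftrightarrow> - 1/2 * ds Ns \<le> (real p' - real p) * ds Ns \<and> (real p' - real p) * ds Ns < 1/2 * ds Ns"
    unfolding detpix_def atLeastLessThan_iff by argo
  also have "\<dots> \<longleftrightarrow> - 1/2 \<le> real p' - real p \<and> real p' - real p < 1/2"
    using mult_le_cancel_right_pos[OF ds_pos[OF assms], of "- 1/2" "real p' - real p"]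
      mult_less_cancel_right_pos[OF ds_pos[OF assms], of "real p' - real p" "1/2"] by simp
  also have "\<dots> \<longleftrightarrow> p = p'"
    by linarith
  finally show ?thesis .
qed

definition hat :: "real \<Rightarrow> real" where
  "hat z = max (1 - \<bar>z\<bar>) 0"

lemma hat_nonzero_iff: "hat z \<noteq> 0 \<longleftrightarrow> \<bar>z\<bar> < 1"
  by (simp add: hat_def max_def)

lemma omega_pd_scaled:
  assumes "\<delta> > 0"
  shows "omega_pd \<delta> (\<delta> * z) = hat z / \<delta>"
proof -
  have "max (\<delta> - \<bar>\<delta> * z\<bar>) 0 = \<delta> * hat z"
    using assms by (simp add: hat_def abs_mult max_mult_distrib_left right_diff_distrib)
  then show ?thesis
    using assms by (simp add: omega_pd_def power2_eq_square)
qed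

lemma hat_support_between:
  assumes "real k < y" "y < real k + 1"
  shows "\<bar>y - real p\<bar> < 1 \<longleftrightarrow> p = k \<or> p = k + 1"
proof
  assume "\<bar>y - real p\<bar> < 1"
  then have "real p < real k + 2" "real k < real p + 1"
    using assms by auto
  then show "p = k \<or> p = k + 1"
    by linarith
qed (use assms in auto)

lemma hat_support_at_node: "\<bar>real k - real p\<bar> < 1 \<longleftrightarrow> p = k"
  by (cases "p \<le> k") (auto simp: abs_if)

lemma hat_partition_of_unity:
  assumes "0 \<le> y" "y \<le> real N - 1"
  shows "(\<Sum>p<N. hat (y - real p)) = 1"
proof -
  define k where "k = nat \<lfloor>y\<rfloor>"
  have k: "real k \<le> y" "y < real k + 1" "k < N"
    using assms by (auto simp: k_def) linarith
  show ?thesis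
  proof (cases "y = real k")
    case True
    have "(\<Sum>p<N. hat (y - real p)) = (\<Sum>p\<in>{k}. hat (y - real p))"
      by (rule sum.mono_neutral_right) (use k True hat_support_at_node hat_nonzero_iff in auto)
    then show ?thesis
      using True by (simp add: hat_def)
  next
    case False
    then have between: "real k < y" "y < real k + 1"
      using k by auto
    then have "k + 1 < N"
      using assms by linarith
    then have "(\<Sum>p<N. hat (y - real p)) = (\<Sum>p\<in>{k, k + 1}. hat (y - real p))"
      by (intro sum.mono_neutral_right) (use hat_support_between[OF between] hat_nonzero_iff in auto)
    also have "\<dots> = 1"
      using between by (simp add: hat_def max_def abs_if)
    finally show ?thesis .
  qed
qed

lemma omega_pd_detector:
  assumes "Ns > 0"
  shows "omega_pd (ds Ns) (x - sc Ns p) = hat ((x - sc Ns 0) / ds Ns - real p) / ds Ns"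
proof -
  have "x - sc Ns p = ds Ns * ((x - sc Ns 0) / ds Ns - real p)"
    using ds_pos[OF assms] by (subst sc_eq) (simp add: field_simps)
  then show ?thesis
    using omega_pd_scaled[OF ds_pos[OF assms]] by simp
qed

lemma omega_pd_detector_nonzero_iff:
  assumes "Ns > 0"
  shows "omega_pd (ds Ns) (x - sc Ns p) \<noteq> 0 \<longleftrightarrow> \<bar>(x - sc Ns 0) / ds Ns - real p\<bar> < 1"
  using ds_pos[OF assms] by (simp add: omega_pd_detector[OF assms] hat_nonzero_iff)

lemma sc_less_iff:
  assumes "Ns > 0"
  shows "sc Ns p < x \<longleftrightarrow> real p < (x - sc Ns 0) / ds Ns"
    and "x < sc Ns p \<longleftrightarrow> (x - sc Ns 0) / ds Ns < real p"
    and "x \<le> sc Ns p \<longleftrightarrow> (x - sc Ns 0) / ds Ns \<le> real p"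
  using ds_pos[OF assms] by (subst sc_eq; simp add: field_simps)+

lemma omega_pd_partition_of_unity:
  assumes "Ns > 0" "sc Ns 0 \<le> x" "x \<le> sc Ns (Ns - 1)"
  shows "(\<Sum>p<Ns. omega_pd (ds Ns) (x - sc Ns p)) = 1 / ds Ns"
proof -
  define y where "y = (x - sc Ns 0) / ds Ns"
  have "0 \<le> y"
    using assms(2) ds_pos[OF assms(1)] by (simp add: y_def)
  moreover have "y \<le> real Ns - 1"
    using sc_less_iff(3)[OF assms(1), of x "Ns - 1"] assms by (simp add: y_def)
  ultimately show ?thesis
    unfolding omega_pd_detector[OF assms(1)] y_def[symmetric] sum_divide_distrib[symmetric]
    by (simp add: hat_partition_of_unity)
qed

lemma omega_pd_support_between_nodes:
  assumes "Ns > 0" "k + 1 < Ns" "sc Ns k < x" "x < sc Ns (k + 1)"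
  shows "{p. p < Ns \<and> omega_pd (ds Ns) (x - sc Ns p) \<noteq> 0} = {k, k + 1}"
proof -
  have "real k < (x - sc Ns 0) / ds Ns" "(x - sc Ns 0) / ds Ns < real k + 1"
    using sc_less_iff(1,2)[OF assms(1)] assms(3,4) by auto
  then show ?thesis
    using assms(2) by (auto simp: omega_pd_detector_nonzero_iff[OF assms(1)] hat_support_between)
qed

lemma omega_pd_support_at_node:
  assumes "Ns > 0" "k < Ns"
  shows "{p. p < Ns \<and> omega_pd (ds Ns) (sc Ns k - sc Ns p) \<noteq> 0} = {k}"
proof -
  have "(sc Ns k - sc Ns 0) / ds Ns = real k"
    using ds_pos[OF assms(1)] by (subst sc_eq) simp
  then show ?thesis
    using assms(2) by (auto simp: omega_pd_detector_nonzero_iff[OF assms(1)] hat_support_at_node)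
qed

section \<open>Angular pixels\<close>

locale angular_grid =
  fixes Nphi :: nat and phi :: "nat \<Rightarrow> real"
  assumes Nphi_pos: "Nphi \<ge> 1"
    and phi_first_nonneg: "0 \<le> phi 0"
    and phi_last_less_pi: "phi (Nphi - 1) < pi"
    and phi_strict_mono: "\<And>q1 q2. q1 < q2 \<Longrightarrow> q2 < Nphi \<Longrightarrow> phi q1 < phi q2"
begin

lemma phi_mono: "q1 \<le> q2 \<Longrightarrow> q2 < Nphi \<Longrightarrow> phi q1 \<le> phi q2"
  using phi_strict_mono[of q1 q2] by (cases "q1 = q2") auto

lemma phi_range:
  assumes "q < Nphi"
  shows "0 \<le> phi q" "phi q < pi"
proof -
  have "phi 0 \<le> phi q" "phi q \<le> phi (Nphi - 1)"
    using assms by (auto intro: phi_mono)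
  then show "0 \<le> phi q" "phi q < pi"
    using phi_first_nonneg phi_last_less_pi by auto
qed

definition angpix_start :: "nat \<Rightarrow> real" where
  "angpix_start q = (phiext Nphi phi (int q - 1) + phiext Nphi phi (int q)) / 2"

lemma angpix_eq_starts:
  "angpix Nphi phi q = {\<psi> \<in> {0..<pi}. \<exists>k::int.
      angpix_start q \<le> \<psi> + real_of_int k * pi \<and> \<psi> + real_of_int k * pi < angpix_start (Suc q)}"
  by (simp add: angpix_def angpix_start_def add.commute)

lemma phiext_of_nat: "q < Nphi \<Longrightarrow> phiext Nphi phi (int q) = phi q"
  by (simp add: phiext_def)

lemma angpix_start_less_phi:
  assumes "q < Nphi"
  shows "angpix_start q < phi q"
proof (cases q)
  case 0
  then show ?thesis
    using assms phi_first_nonneg phi_last_less_pi by (simp add: angpix_start_def phiext_def)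
next
  case (Suc q')
  then have "phiext Nphi phi (int q - 1) = phi q'"
    using assms phiext_of_nat[of q'] by simp
  then show ?thesis
    using phi_strict_mono[of q' q] assms Suc phiext_of_nat[OF assms] by (simp add: angpix_start_def)
qed

lemma phi_less_angpix_start_Suc:
  assumes "q < Nphi"
  shows "phi q < angpix_start (Suc q)"
proof (cases "Suc q = Nphi")
  case True
  then have "phiext Nphi phi (int (Suc q)) = phi 0 + pi"
    by (simp add: phiext_def)
  moreover have "phi q < phi 0 + pi"
    using phi_range[OF assms] phi_first_nonneg by simp
  ultimately show ?thesis
    using phiext_of_nat[OF assms] by (simp add: angpix_start_def)
next
  case False
  then have "Suc q < Nphi"
    using assms by simp
  then show ?thesis
    using phi_strict_mono[of q "Suc q"] phiext_of_nat[OF assms] phiext_of_nat[of "Suc q"]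
    by (simp add: angpix_start_def)
qed

lemma angpix_start_mono:
  assumes "q1 \<le> q2" "q2 \<le> Nphi"
  shows "angpix_start q1 \<le> angpix_start q2"
  using assms
proof (induction q2)
  case (Suc q2)
  show ?case
  proof (cases "q1 = Suc q2")
    case False
    then have "angpix_start q1 \<le> angpix_start q2"
      using Suc by simp
    also have "\<dots> \<le> angpix_start (Suc q2)"
      using angpix_start_less_phi[of q2] phi_less_angpix_start_Suc[of q2] Suc.prems by simp
    finally show ?thesis .
  qed simp
qed simp

lemma angpix_start_Nphi: "angpix_start Nphi = angpix_start 0 + pi"
proof -
  have "phiext Nphi phi (int Nphi - 1) = phi (Nphi - 1)"
    using Nphi_pos phiext_of_nat[of "Nphi - 1"] by simp
  then show ?thesis
    using Nphi_pos by (simp add: angpix_start_def phiext_def field_simps)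
qed

lemma phi_mem_angpix_iff:
  assumes "qh < Nphi" "q < Nphi"
  shows "phi qh \<in> angpix Nphi phi q \<longleftrightarrow> q = qh"
proof
  assume "q = qh"
  then show "phi qh \<in> angpix Nphi phi q"
    unfolding angpix_eq_starts
    using phi_range[OF assms(1)] angpix_start_less_phi[OF assms(1)] phi_less_angpix_start_Suc[OF assms(1)]
    by (auto intro!: exI[of _ 0])
next
  assume "phi qh \<in> angpix Nphi phi q"
  then obtain k :: int where k: "angpix_start q \<le> phi qh + k * pi" "phi qh + k * pi < angpix_start (Suc q)"
    unfolding angpix_eq_starts by auto
  have period: "angpix_start 0 \<le> angpix_start q" "angpix_start (Suc q) \<le> angpix_start 0 + pi"
    "angpix_start 0 < phi qh" "phi qh < angpix_start 0 + pi"
    using angpix_start_mono[of 0 q] angpix_start_mono[of "Suc q" Nphi] angpix_start_Nphi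
      angpix_start_mono[of 0 qh] angpix_start_less_phi[OF assms(1)]
      angpix_start_mono[of "Suc qh" Nphi] phi_less_angpix_start_Suc[OF assms(1)] assms
    by auto
  \<comment> \<open>The angular cells tile one period starting at \<open>angpix_start 0\<close>, so no other shift fits.\<close>
  have "k = 0"
  proof -
    have "real_of_int k * pi < 1 * pi" "-1 * pi < real_of_int k * pi"
      using k period by linarith+
    then have "real_of_int k < 1" "-1 < real_of_int k"
      by (simp_all only: mult_less_cancel_right_pos[OF pi_gt_zero])
    then show ?thesis
      by linarith
  qed
  then have "angpix_start q \<le> phi qh" "phi qh < angpix_start (Suc q)"
    using k by auto
  then show "q = qh"
    using angpix_start_mono[of "Suc q" qh] angpix_start_mono[of "Suc qh" q] assms
      angpix_start_less_phi[OF assms(1)] phi_less_angpix_start_Suc[OF assms(1)]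
    by (cases q qh rule: linorder_cases) auto
qed

lemma conv_radon_at_node:
  assumes "Ns > 0" "qh < Nphi" "ph < Ns"
  shows "conv_radon Nx Ns Nphi phi \<omega> f (phi qh) (sc Ns ph)
       = (\<Sum>i<Nx. \<Sum>j<Nx. \<omega> (phi qh) (xc Nx i j \<bullet> theta (phi qh) - sc Ns ph) * integral (pix Nx i j) f)"
proof -
  define S where "S q p = (\<Sum>i<Nx. \<Sum>j<Nx. \<omega> (phi q) (xc Nx i j \<bullet> theta (phi q) - sc Ns p) * integral (pix Nx i j) f)" for q p
  have "indicator (angpix Nphi phi q \<times> detpix Ns p) (phi qh, sc Ns ph) * S q p = (if q = qh \<and> p = ph then S qh ph else 0)"
    if "q < Nphi" "p < Ns" for q p
    using phi_mem_angpix_iff[OF assms(2) that(1)] sc_mem_detpix_iff[OF assms(1)] by (auto simp: indicator_def)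
  then have "(\<Sum>p<Ns. indicator (angpix Nphi phi q \<times> detpix Ns p) (phi qh, sc Ns ph) * S q p)
      = (if q = qh then S qh ph else 0)" if "q < Nphi" for q
    using that assms(3) by (cases "q = qh") simp_all
  then show ?thesis
    using assms(2) by (simp add: conv_radon_def S_def[symmetric])
qed

lemma radon_eq_ray_radon_at_node:
  assumes "in_U Nx f" and supp: "\<And>x. x \<notin> cball 0 1 \<Longrightarrow> f x = 0"
    and "Ns > 0" "qh < Nphi" "ph < Ns"
  shows "radon f (phi qh) (sc Ns ph) = ray_radon Nx Ns Nphi phi f (phi qh) (sc Ns ph)"
proof -
  obtain c where f: "f = (\<lambda>x. \<Sum>i<Nx. \<Sum>j<Nx. c i j * ubasis Nx i j x)"
    using assms(1) unfolding in_U_def by blast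
  define w where "w i j = omega_rd (dx Nx) (phi qh) (xc Nx i j \<bullet> theta (phi qh) - sc Ns ph)" for i j
  have line: "((\<lambda>t. f (sc Ns ph *\<^sub>R theta (phi qh) + t *\<^sub>R thetap (phi qh))) has_integral
      (\<Sum>i<Nx. \<Sum>j<Nx. c i j * (dx Nx^2 * w i j))) {-2..2}"
    unfolding f w_def using phi_range[OF assms(4)]
    by (intro has_integral_sum has_integral_mult_right ubasis_line_integral) auto
  have "radon f (phi qh) (sc Ns ph) = (\<Sum>i<Nx. \<Sum>j<Nx. c i j * (dx Nx^2 * w i j))"
    by (rule radon_eq_line_integral[OF supp one_le_numeral line])
  also have "\<dots> = (\<Sum>i<Nx. \<Sum>j<Nx. w i j * integral (pix Nx i j) f)"
    unfolding f by (intro sum.cong refl) (simp add: integral_pix_in_U)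
  also have "\<dots> = ray_radon Nx Ns Nphi phi f (phi qh) (sc Ns ph)"
    unfolding ray_radon_def w_def by (rule conv_radon_at_node[symmetric]) (use assms in auto)
  finally show ?thesis .
qed

end

theorem lemma1:
  fixes Nx Ns Nphi :: nat and phi :: "nat \<Rightarrow> real" and f :: "real \<times> real \<Rightarrow> real"
  assumes "Nx \<ge> 1" and "Ns \<ge> 1" and "Nphi \<ge> 1"
    and "0 \<le> phi 0" and "phi (Nphi - 1) < pi"
    and "\<And>q1 q2. q1 < q2 \<Longrightarrow> q2 < Nphi \<Longrightarrow> phi q1 < phi q2"
    and "in_U Nx f"
    and "\<And>x. x \<notin> cball 0 1 \<Longrightarrow> f x = 0"
  shows "(\<forall>qh<Nphi. \<forall>ph<Ns.
            radon f (phi qh) (sc Ns ph) = ray_radon Nx Ns Nphi phi f (phi qh) (sc Ns ph))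
       \<and> (\<forall>qh<Nphi. \<forall>ih<Nx. \<forall>jh<Nx.
            xc Nx ih jh \<bullet> theta (phi qh) \<in> {sc Ns 0 .. sc Ns (Ns - 1)} \<longrightarrow>
              (\<Sum>p<Ns. omega_pd (ds Ns) (xc Nx ih jh \<bullet> theta (phi qh) - sc Ns p)) = 1 / ds Ns
            \<and> (\<forall>ph<Ns.
                 (ph + 1 < Ns \<and> sc Ns ph < xc Nx ih jh \<bullet> theta (phi qh)
                    \<and> xc Nx ih jh \<bullet> theta (phi qh) < sc Ns (ph + 1) \<longrightarrow>
                  {p. p < Ns \<and> omega_pd (ds Ns) (xc Nx ih jh \<bullet> theta (phi qh) - sc Ns p) \<noteq> 0}
                    = {ph, ph + 1})
               \<and> (xc Nx ih jh \<bullet> theta (phi qh) = sc Ns ph \<longrightarrow>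
                  {p. p < Ns \<and> omega_pd (ds Ns) (xc Nx ih jh \<bullet> theta (phi qh) - sc Ns p) \<noteq> 0}
                    = {ph})))"
proof -
  interpret angular_grid Nphi phi
    using assms(3-6) by unfold_locales
  have Ns: "Ns > 0"
    using assms(2) by simp
  show ?thesis
    using radon_eq_ray_radon_at_node[OF assms(7,8) Ns] omega_pd_partition_of_unity[OF Ns]
      omega_pd_support_between_nodes[OF Ns] omega_pd_support_at_node[OF Ns]
    by auto
qed

end
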